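(* Under the model below, for every batch $h$ and every packet index $k$ in that batch, $$\hat d_h^k - d_h^k \le \frac{(2M-1)L}{Nr},$$ i.e. every packet departs under MPGPS at most $(2M-1)L/(Nr)$ time units later than it departs under GPS.
   Context: Model. There are $K$ users (sessions) with separate FIFO queues, and $N$ servers (subcarriers), each transmitting $r$ bits per unit time, so the total service rate is $Nr$. All packets have the same length $L$ bits. Transmissions are error free. The same packet arrival sequence is fed to two systems. GPS (generalized processor sharing): a fluid system of total rate $Nr$; each user $k$ has a weight $\phi_k>0$, and at every instant each backlogged user $k$ is served at rate $Nr\,\phi_k/\sum_{j\in B}\phi_j$, where $B$ is the set of currently backlogged users. A packet's GPS departure time is the time its last bit is served in GPS. MPGPS (multi-server packetized GPS) with parameter $M\ge 1$: it is work conserving (servers are never idle while packets are queued). Whenever the servers become idle at a time $\tau$, among all packets queued at $\tau$ it selects the $\min\big(M,\sum_{k}\hat Q_k(\tau)\big)$ packets that would be the first to complete service in the corresponding GPS system if no further packets arrived after $\tau$ ($\hat Q_k(\tau)$ is the number of user-$k$ packets queued under MPGPS at $\tau$). These selected packets form one batch; a batch of $M_h$ packets is transmitted jointly over all $N$ servers, occupies the servers for $M_hL/(Nr)$ time units, and all its packets depart at the end of that period. Batches are indexed $h=1,2,\dots$; $f_h^k$ denotes the $k$-th packet of batch $h$, $\hat d_h^k$ its departure time under MPGPS, and $d_h^k$ its departure time under GPS. *)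

theory Defs
  imports "HOL-Analysis.Analysis"
begin

text \<open>Packets are elements of a type 'p, linearly ordered by their position in the
arrival sequence (used only to break ties between packets of one user arriving at
the same instant).  a p = arrival time, u p = user (session) of packet p.
Users are 0..K-1.  All packets have length L bits.\<close>

definition arrived_work :: "real \<Rightarrow> ('p \<Rightarrow> real) \<Rightarrow> ('p \<Rightarrow> nat) \<Rightarrow> 'p set \<Rightarrow> nat \<Rightarrow> real \<Rightarrow> real" where
  "arrived_work L a u P k t = L * real (card {p \<in> P. u p = k \<and> a p \<le> t})"

definition gps_rate :: "nat \<Rightarrow> real \<Rightarrow> (nat \<Rightarrow> real) \<Rightarrow> nat \<Rightarrow> (nat \<Rightarrow> real \<Rightarrow> real)
    \<Rightarrow> (nat \<Rightarrow> real \<Rightarrow> real) \<Rightarrow> nat \<Rightarrow> real \<Rightarrow> real" where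
  "gps_rate N r \<phi> K A S k s =
     (if S k s < A k s
      then real N * r * \<phi> k / (\<Sum>j\<in>{j. j < K \<and> S j s < A j s}. \<phi> j)
      else 0)"

definition is_gps :: "nat \<Rightarrow> real \<Rightarrow> (nat \<Rightarrow> real) \<Rightarrow> nat \<Rightarrow> (nat \<Rightarrow> real \<Rightarrow> real)
    \<Rightarrow> (nat \<Rightarrow> real \<Rightarrow> real) \<Rightarrow> bool" where
  "is_gps N r \<phi> K A S \<longleftrightarrow>
     (\<forall>k<K. \<forall>t\<ge>0. (gps_rate N r \<phi> K A S k has_integral S k t) {0..t})"

definition fifo_pos :: "('p::linorder \<Rightarrow> real) \<Rightarrow> ('p \<Rightarrow> nat) \<Rightarrow> 'p set \<Rightarrow> 'p \<Rightarrow> nat" where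
  "fifo_pos a u P p = card {q \<in> P. u q = u p \<and> (a q < a p \<or> (a q = a p \<and> q \<le> p))}"

text \<open>GPS departure time: the time the last bit of p is served (service of its user
reaches fifo_pos * L).\<close>
definition gps_departure :: "real \<Rightarrow> ('p::linorder \<Rightarrow> real) \<Rightarrow> ('p \<Rightarrow> nat) \<Rightarrow> 'p set
    \<Rightarrow> (nat \<Rightarrow> real \<Rightarrow> real) \<Rightarrow> 'p \<Rightarrow> real" where
  "gps_departure L a u P S p = Inf {t. 0 \<le> t \<and> real (fifo_pos a u P p) * L \<le> S (u p) t}"

text \<open>MPGPS: batch h (h = 0,1,2,... corresponds to the paper's h = 1,2,...) starts at tau h
and consists of the packet set F h.\<close>
definition batch_end :: "nat \<Rightarrow> real \<Rightarrow> real \<Rightarrow> (nat \<Rightarrow> real) \<Rightarrow> (nat \<Rightarrow> 'p set) \<Rightarrow> nat \<Rightarrow> real" where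
  "batch_end N r L tau F h = tau h + real (card (F h)) * L / (real N * r)"

definition prev_end :: "nat \<Rightarrow> real \<Rightarrow> real \<Rightarrow> (nat \<Rightarrow> real) \<Rightarrow> (nat \<Rightarrow> 'p set) \<Rightarrow> nat \<Rightarrow> real" where
  "prev_end N r L tau F h = (if h = 0 then 0 else batch_end N r L tau F (h - 1))"

definition mpgps_queue :: "('p \<Rightarrow> real) \<Rightarrow> (nat \<Rightarrow> 'p set) \<Rightarrow> nat \<Rightarrow> real \<Rightarrow> 'p set" where
  "mpgps_queue a F h t = {p. a p \<le> t \<and> p \<notin> (\<Union>h'<h. F h')}"

text \<open>gps P : service curves of the GPS system fed only with the packets in P.
The hypothetical departure times at decision instant tau are those of the GPS system
fed with the packets arrived by tau (no further arrivals).\<close>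
definition is_mpgps :: "nat \<Rightarrow> real \<Rightarrow> real \<Rightarrow> nat \<Rightarrow> ('p::linorder \<Rightarrow> real) \<Rightarrow> ('p \<Rightarrow> nat)
    \<Rightarrow> ('p set \<Rightarrow> nat \<Rightarrow> real \<Rightarrow> real) \<Rightarrow> (nat \<Rightarrow> real) \<Rightarrow> (nat \<Rightarrow> 'p set) \<Rightarrow> bool" where
  "is_mpgps N r L M a u gps tau F \<longleftrightarrow>
    (\<forall>h. let e = prev_end N r L tau F h;
             Q = mpgps_queue a F h (tau h);
             P = {x. a x \<le> tau h};
             hd = gps_departure L a u P (gps P)
         in if (\<exists>t\<ge>e. mpgps_queue a F h t \<noteq> {})
            then e \<le> tau h \<and> Q \<noteq> {}
                 \<and> (\<forall>t. e \<le> t \<and> t < tau h \<longrightarrow> mpgps_queue a F h t = {})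
                 \<and> F h \<subseteq> Q \<and> card (F h) = min M (card Q)
                 \<and> (\<forall>p\<in>F h. \<forall>q\<in>Q - F h. hd p \<le> hd q)
            else F h = {})"

end

theory Submission
  imports Defs
begin

text \<open>
  Two properties of GPS drive the bound. GPS serves the packets present at an instant \<tau> in the
  order of their weight-normalized remaining work, so the order that MPGPS computes at \<tau> from
  the packets arrived so far is also the order in which the real GPS system completes them. And
  GPS, serving at total rate N r, cannot complete packets that all arrive after t0 earlier than
  t0 plus their total length divided by N r.

  Let p belong to batch h and let g be the last batch of the current busy period before h that
  contains a packet q completed by GPS after p. A packet of a later batch that GPS completes no
  later than p arrived after \<tau>_g: otherwise it was queued when batch g was formed and would
  have been selected instead of q. Hence GPS completes p and batches g+1, ..., h-1 within
  [\<tau>_g, d_p], while MPGPS, serving back to back from \<tau>_g, completes batch h once batches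
  g, ..., h have been transmitted. The difference is at most |F_g| + |F_h| - 1 \<le> 2M - 1 packet
  lengths. Without such a batch g the same count starts at the beginning of the busy period.
\<close>

section \<open>The GPS fluid system\<close>

locale gps_system =
  fixes N :: nat and r :: real and \<phi> :: "nat \<Rightarrow> real" and K :: nat
    and A S :: "nat \<Rightarrow> real \<Rightarrow> real"
  assumes capacity_pos: "0 < real N * r"
    and weight_pos: "\<And>k. k < K \<Longrightarrow> 0 < \<phi> k"
    and is_gps: "is_gps N r \<phi> K A S"
    and arrivals_mono: "\<And>k s t. s \<le> t \<Longrightarrow> A k s \<le> A k t"
    and arrivals_nonneg: "\<And>k t. 0 \<le> A k t"
begin

abbreviation C :: real where "C \<equiv> real N * r"
abbreviation rate :: "nat \<Rightarrow> real \<Rightarrow> real" where "rate \<equiv> gps_rate N r \<phi> K A S"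
abbreviation backlog :: "real \<Rightarrow> nat set" where "backlog s \<equiv> {j. j < K \<and> S j s < A j s}"
abbreviation reach_time :: "real \<Rightarrow> nat \<Rightarrow> real" where
  "reach_time T k \<equiv> Inf {t. 0 \<le> t \<and> T \<le> S k t}"

lemma rate_eq:
  "k < K \<Longrightarrow> rate k s = (if k \<in> backlog s then C * \<phi> k / sum \<phi> (backlog s) else 0)"
  by (simp add: gps_rate_def)

lemma weight_le_backlog_weight: "k \<in> backlog s \<Longrightarrow> \<phi> k \<le> sum \<phi> (backlog s)"
  by (rule member_le_sum) (auto intro: less_imp_le weight_pos)

lemma backlog_weight_pos: "k \<in> backlog s \<Longrightarrow> 0 < sum \<phi> (backlog s)"
  using weight_le_backlog_weight weight_pos by force

lemma rate_nonneg: "k < K \<Longrightarrow> 0 \<le> rate k s"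
  using backlog_weight_pos[of k s] weight_pos[of k] capacity_pos
  by (simp add: rate_eq less_imp_le)

lemma rate_le_capacity: "k < K \<Longrightarrow> rate k s \<le> C"
  using weight_le_backlog_weight[of k s] backlog_weight_pos[of k s] capacity_pos
  by (simp add: rate_eq divide_le_eq mult_left_mono)

lemma guaranteed_rate_le_rate:
  assumes "k \<in> backlog s"
  shows "C * \<phi> k / (\<Sum>j<K. \<phi> j) \<le> rate k s"
proof -
  have "sum \<phi> (backlog s) \<le> (\<Sum>j<K. \<phi> j)"
    by (rule sum_mono2) (auto intro: less_imp_le weight_pos)
  then show ?thesis
    using assms weight_pos[of k] backlog_weight_pos[OF assms] capacity_pos
    by (simp add: rate_eq divide_left_mono)
qed

lemma normalized_rate_eq:
  "k \<in> backlog s \<Longrightarrow> j \<in> backlog s \<Longrightarrow> rate k s / \<phi> k = rate j s / \<phi> j"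
  using weight_pos[of k] weight_pos[of j] by (simp add: rate_eq)

lemma sum_rate_le_capacity: "(\<Sum>k<K. rate k s) \<le> C"
proof (cases "backlog s = {}")
  case True
  then show ?thesis using capacity_pos by (simp add: rate_eq)
next
  case False
  then have pos: "0 < sum \<phi> (backlog s)" using backlog_weight_pos by blast
  have "(\<Sum>k<K. rate k s) = (\<Sum>k\<in>backlog s. C * \<phi> k / sum \<phi> (backlog s))"
    by (simp add: rate_eq sum.If_cases Int_def)
  also have "\<dots> = C"
    using pos by (simp add: sum_divide_distrib[symmetric] sum_distrib_left[symmetric])
  finally show ?thesis by simp
qed

lemma service_0:
  assumes k: "k < K"
  shows "S k 0 = 0"
proof -
  have "(rate k has_integral S k 0) {0..0}" using is_gps k unfolding is_gps_def by blast
  then show ?thesis using has_integral_refl(2)[of "rate k" 0] has_integral_unique by simp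
qed

lemma service_has_integral:
  assumes k: "k < K" and s: "0 \<le> s" "s \<le> t"
  shows "(rate k has_integral (S k t - S k s)) {s..t}"
proof -
  have t: "(rate k has_integral S k t) {0..t}" and s0: "(rate k has_integral S k s) {0..s}"
    using is_gps k s unfolding is_gps_def by auto
  obtain I where I: "(rate k has_integral I) {s..t}"
    using integrable_subinterval_real[of "rate k" 0 t s t] t s by auto
  have "S k t = S k s + I"
    using has_integral_unique[OF t has_integral_combine[OF s s0 I]] .
  then show ?thesis using I by simp
qed

lemma service_mono: "k < K \<Longrightarrow> 0 \<le> s \<Longrightarrow> s \<le> t \<Longrightarrow> S k s \<le> S k t"
  using has_integral_nonneg[OF service_has_integral] rate_nonneg by fastforce

lemma service_nonneg: "k < K \<Longrightarrow> 0 \<le> t \<Longrightarrow> 0 \<le> S k t"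
  using service_mono[of k 0 t] service_0 by simp

lemma service_increment_le:
  assumes "k < K" "0 \<le> s" "s \<le> t"
  shows "S k t - S k s \<le> C * (t - s)"
proof -
  have "((\<lambda>x. C) has_integral C * (t - s)) {s..t}"
    using has_integral_const_real[of C s t] assms by (simp add: mult.commute)
  then show ?thesis
    using has_integral_le[OF service_has_integral[OF assms]] rate_le_capacity assms by auto
qed

lemma total_service_increment_le:
  assumes "0 \<le> s" "s \<le> t"
  shows "(\<Sum>k<K. S k t - S k s) \<le> C * (t - s)"
proof -
  have "((\<lambda>x. \<Sum>k<K. rate k x) has_integral (\<Sum>k<K. S k t - S k s)) {s..t}"
    by (rule has_integral_sum) (use service_has_integral assms in auto)
  moreover have "((\<lambda>x. C) has_integral C * (t - s)) {s..t}"
    using has_integral_const_real[of C s t] assms by (simp add: mult.commute)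
  ultimately show ?thesis using has_integral_le sum_rate_le_capacity by blast
qed

lemma service_continuous:
  assumes k: "k < K"
  shows "continuous_on {0..} (S k)"
proof (rule lipschitz_on_continuous_on[of C], rule lipschitz_onI)
  have lip: "\<bar>S k y - S k x\<bar> \<le> C * (y - x)" if "0 \<le> x" "x \<le> y" for x y
    using service_mono[OF k that] service_increment_le[OF k that] by simp
  fix s t :: real
  assume "s \<in> {0..}" "t \<in> {0..}"
  then show "dist (S k s) (S k t) \<le> C * dist s t"
    using lip[of s t] lip[of t s] by (cases "s \<le> t") (auto simp: dist_real_def abs_minus_commute)
qed (use capacity_pos in simp)

lemma closed_service_sublevel:
  assumes "k < K"
  shows "closed ({0..t} \<inter> S k -` {..m})"
  by (rule continuous_closed_preimage)
    (auto intro: continuous_on_subset[OF service_continuous[OF assms]])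

lemma service_le_if_le_before:
  assumes k: "k < K" and t: "0 \<le> t" and m: "0 \<le> m"
    and before: "\<And>s. 0 \<le> s \<Longrightarrow> s < t \<Longrightarrow> S k s \<le> m"
  shows "S k t \<le> m"
proof (cases "t = 0")
  case True
  then show ?thesis using service_0 k m by simp
next
  case False
  have "{0..<t} \<subseteq> {0..t} \<inter> S k -` {..m}" using before by auto
  then have "closure {0..<t} \<subseteq> {0..t} \<inter> S k -` {..m}"
    by (rule closure_minimal) (rule closed_service_sublevel[OF k])
  moreover have "t \<in> closure {0..<t}" using False t by simp
  ultimately show ?thesis by auto
qed

lemma service_le_arrivals:
  assumes k: "k < K" and t: "0 \<le> t"
  shows "S k t \<le> A k t"
proof (rule ccontr)
  assume exceeds: "\<not> S k t \<le> A k t"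
  define Z where "Z = {0..t} \<inter> S k -` {..A k t}"
  have "0 \<in> Z" using t service_0[OF k] arrivals_nonneg by (simp add: Z_def)
  moreover have bdd: "bdd_above Z" unfolding Z_def by (rule bdd_above_Int1) simp
  moreover have "closed Z" unfolding Z_def by (rule closed_service_sublevel[OF k])
  ultimately have "Sup Z \<in> Z" using closed_contains_Sup by blast
  then have s0: "0 \<le> Sup Z" "Sup Z \<le> t" "S k (Sup Z) \<le> A k t" by (auto simp: Z_def)
  \<comment> \<open>after Sup Z user k has received more than A k t, so it is idle and its service stays put\<close>
  have idle: "rate k x = 0" if "x \<in> {Sup Z..t} - {Sup Z}" for x
  proof -
    have "x \<notin> Z" using that cSup_upper[OF _ bdd, of x] by force
    then have "A k t < S k x" using that s0 by (auto simp: Z_def)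
    moreover have "A k x \<le> A k t" using arrivals_mono that by auto
    ultimately show ?thesis by (simp add: gps_rate_def)
  qed
  have "((\<lambda>x. 0) has_integral (S k t - S k (Sup Z))) {Sup Z..t}"
    by (rule has_integral_spike_finite[of "{Sup Z}" _ _ "rate k"])
      (use idle service_has_integral[OF k s0(1,2)] in auto)
  then have "S k t = S k (Sup Z)" using has_integral_unique has_integral_0 by force
  then show False using s0(3) exceeds by simp
qed

lemma service_eventually_reaches:
  assumes k: "k < K" and t1: "0 \<le> t1" and arrived: "\<And>t. t1 \<le> t \<Longrightarrow> T \<le> A k t"
  shows "\<exists>t\<ge>0. T \<le> S k t"
proof (rule ccontr)
  assume "\<not> ?thesis"
  then have below: "\<And>t. 0 \<le> t \<Longrightarrow> S k t < T" by force
  define c where "c = C * \<phi> k / (\<Sum>j<K. \<phi> j)"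
  have "\<phi> k \<le> (\<Sum>j<K. \<phi> j)"
    using k by (intro member_le_sum) (auto intro: less_imp_le weight_pos)
  then have c: "0 < c" using weight_pos[OF k] capacity_pos by (simp add: c_def)
  define t where "t = t1 + \<bar>T\<bar> / c + 1"
  have t: "t1 \<le> t" using c by (simp add: t_def)
  \<comment> \<open>while user k is backlogged it is served at least at its guaranteed rate c\<close>
  have "c \<le> rate k x" if "x \<in> {t1..t}" for x
    unfolding c_def using guaranteed_rate_le_rate below[of x] arrived[of x] that t1 k by force
  then have "c * (t - t1) \<le> S k t - S k t1"
    using has_integral_le[OF has_integral_const_real[of c t1 t] service_has_integral[OF k t1 t]] t
    by (simp add: mult.commute)
  moreover have "c * (t - t1) = \<bar>T\<bar> + c" using c by (simp add: t_def field_simps)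
  ultimately show False
    using service_nonneg[OF k t1] below[of t] t t1 c by linarith
qed

lemma reach_time_le: "0 \<le> t \<Longrightarrow> T \<le> S k t \<Longrightarrow> reach_time T k \<le> t"
  by (rule cInf_lower) (auto intro: bdd_belowI[of _ 0])

lemma service_less_before_reach_time: "0 \<le> t \<Longrightarrow> t < reach_time T k \<Longrightarrow> S k t < T"
  using reach_time_le[of t T k] by linarith

lemma reach_time_nonneg: "\<exists>t\<ge>0. T \<le> S k t \<Longrightarrow> 0 \<le> reach_time T k"
  by (rule cInf_greatest) auto

lemma service_at_reach_time:
  assumes k: "k < K" and T: "0 < T" and reached: "\<exists>t\<ge>0. T \<le> S k t"
  shows "S k (reach_time T k) = T"
proof (rule antisym)
  have "closed ({0..} \<inter> S k -` {T..})"
    by (rule continuous_closed_preimage[OF service_continuous[OF k]]) auto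
  moreover have "{t. 0 \<le> t \<and> T \<le> S k t} = {0..} \<inter> S k -` {T..}" by auto
  ultimately have "reach_time T k \<in> {0..} \<inter> S k -` {T..}"
    using closed_contains_Inf[of "{0..} \<inter> S k -` {T..}"] reached by (auto intro: bdd_belowI[of _ 0])
  then show "T \<le> S k (reach_time T k)" by simp
  show "S k (reach_time T k) \<le> T"
    using service_le_if_le_before[OF k reach_time_nonneg[OF reached]] service_less_before_reach_time T
    by (meson less_imp_le)
qed

lemma normalized_service_eq:
  assumes k: "k < K" and j: "j < K" and s: "0 \<le> s" "s \<le> t"
    and both_backlogged: "\<And>x. s \<le> x \<Longrightarrow> x < t \<Longrightarrow> k \<in> backlog x \<and> j \<in> backlog x"
  shows "(S k t - S k s) / \<phi> k = (S j t - S j s) / \<phi> j"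
proof -
  have "((\<lambda>x. rate k x / \<phi> k - rate j x / \<phi> j) has_integral
          ((S k t - S k s) / \<phi> k - (S j t - S j s) / \<phi> j)) {s..t}"
    by (intro has_integral_diff has_integral_divide service_has_integral k j s)
  then have "((\<lambda>x. 0) has_integral
          ((S k t - S k s) / \<phi> k - (S j t - S j s) / \<phi> j)) {s..t}"
    by (rule has_integral_spike_finite[where S="{t}", rotated -1])
       (use normalized_rate_eq both_backlogged in auto)
  then show ?thesis
    using has_integral_unique has_integral_0 by force
qed

lemma backlog_constant_after:
  assumes t0: "0 \<le> t0"
    and const: "\<exists>e>0. \<forall>k<K. \<forall>t. t0 \<le> t \<and> t < t0 + e \<longrightarrow> A k t = A k t0"
  shows "\<exists>\<epsilon>>0. \<forall>t. t0 \<le> t \<and> t < t0 + \<epsilon> \<longrightarrow> backlog t = backlog t0"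
proof -
  obtain e where e: "0 < e" and A_const: "\<forall>k<K. \<forall>t. t0 \<le> t \<and> t < t0 + e \<longrightarrow> A k t = A k t0"
    using const by (elim exE conjE)
  define g where "g = Min (insert 1 ((\<lambda>k. A k t0 - S k t0) ` backlog t0))"
  have g: "0 < g" unfolding g_def by (subst Min_gr_iff) auto
  have gap: "g \<le> A k t0 - S k t0" if "k \<in> backlog t0" for k
    unfolding g_def using that by (intro Min_le) auto
  \<comment> \<open>backlogged users stay backlogged for a while since S k grows at rate at most C,
     the others stay idle since A k is constant\<close>
  have "backlog t = backlog t0" if t: "t0 \<le> t" "t < t0 + min e (g / C)" for t
  proof -
    have "t - t0 < g / C" using t by simp
    then have "C * (t - t0) < g" using capacity_pos by (simp add: pos_less_divide_eq mult.commute)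
    then have "S k t < S k t0 + g" if "k < K" for k
      using service_increment_le[OF that t0 t(1)] by linarith
    moreover have "S k t0 \<le> S k t" if "k < K" for k using service_mono[OF that t0 t(1)] .
    moreover have "A k t = A k t0" if "k < K" for k using A_const[rule_format, of k t] t that by simp
    ultimately show ?thesis using gap by fastforce
  qed
  moreover have "0 < min e (g / C)" using e g capacity_pos by simp
  ultimately show ?thesis by blast
qed

end

section \<open>GPS systems with equal arrivals\<close>

lemma gps_service_agree_after:
  assumes sys: "gps_system N r \<phi> K A S" and sys': "gps_system N r \<phi> K A' S'"
    and t0: "0 \<le> t0"
    and const: "\<exists>e>0. \<forall>k<K. \<forall>t. t0 \<le> t \<and> t < t0 + e \<longrightarrow> A k t = A k t0"
    and const': "\<exists>e>0. \<forall>k<K. \<forall>t. t0 \<le> t \<and> t < t0 + e \<longrightarrow> A' k t = A' k t0"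
    and same_arrivals: "\<And>k. k < K \<Longrightarrow> A' k t0 = A k t0"
    and agree: "\<And>k. k < K \<Longrightarrow> S' k t0 = S k t0"
  obtains \<epsilon> where "0 < \<epsilon>" "\<And>k t. k < K \<Longrightarrow> t0 \<le> t \<Longrightarrow> t < t0 + \<epsilon> \<Longrightarrow> S' k t = S k t"
proof -
  interpret G: gps_system N r \<phi> K A S by (fact sys)
  interpret G': gps_system N r \<phi> K A' S' by (fact sys')
  obtain \<epsilon> where \<epsilon>: "0 < \<epsilon>"
    and B: "\<forall>t. t0 \<le> t \<and> t < t0 + \<epsilon> \<longrightarrow> G.backlog t = G.backlog t0"
    using G.backlog_constant_after[OF t0 const] by (elim exE conjE)
  obtain \<epsilon>' where \<epsilon>': "0 < \<epsilon>'"
    and B': "\<forall>t. t0 \<le> t \<and> t < t0 + \<epsilon>' \<longrightarrow> G'.backlog t = G'.backlog t0"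
    using G'.backlog_constant_after[OF t0 const'] by (elim exE conjE)
  have backlog_t0: "G'.backlog t0 = G.backlog t0" using same_arrivals agree by auto
  have same_rate: "G'.rate k x = G.rate k x"
    if k: "k < K" and x: "x \<in> {t0..t0 + min \<epsilon> \<epsilon>'}" "x \<noteq> t0 + min \<epsilon> \<epsilon>'" for k x
  proof -
    have "x < t0 + \<epsilon>" "x < t0 + \<epsilon>'"
      using x min.cobounded1[of \<epsilon> \<epsilon>'] min.cobounded2[of \<epsilon> \<epsilon>'] by auto
    then have "G'.backlog x = G.backlog x"
      using B[rule_format, of x] B'[rule_format, of x] x backlog_t0 by simp
    moreover from this have "S' k x < A' k x \<longleftrightarrow> S k x < A k x" using k by blast
    ultimately show ?thesis unfolding gps_rate_def by simp
  qed
  show ?thesis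
  proof (rule that[of "min \<epsilon> \<epsilon>'"])
    fix k t assume k: "k < K" and t: "t0 \<le> t" "t < t0 + min \<epsilon> \<epsilon>'"
    have "(G'.rate k has_integral (S k t - S k t0)) {t0..t}"
      by (rule has_integral_spike_finite[OF _ _ G.service_has_integral[OF k t0 t(1)], of "{t}"])
        (use same_rate[OF k] t in auto)
    then have "S' k t - S' k t0 = S k t - S k t0"
      using G'.service_has_integral[OF k t0 t(1)] has_integral_unique by blast
    then show "S' k t = S k t" using agree[OF k] by simp
  qed (use \<epsilon> \<epsilon>' in simp)
qed

lemma gps_service_agree:
  assumes sys: "gps_system N r \<phi> K A S" and sys': "gps_system N r \<phi> K A' S'"
    and const: "\<And>t0. 0 \<le> t0 \<Longrightarrow> \<exists>e>0. \<forall>k<K. \<forall>t. t0 \<le> t \<and> t < t0 + e \<longrightarrow> A k t = A k t0"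
    and const': "\<And>t0. 0 \<le> t0 \<Longrightarrow> \<exists>e>0. \<forall>k<K. \<forall>t. t0 \<le> t \<and> t < t0 + e \<longrightarrow> A' k t = A' k t0"
    and same_arrivals: "\<And>k t. k < K \<Longrightarrow> 0 \<le> t \<Longrightarrow> t \<le> \<tau> \<Longrightarrow> A' k t = A k t"
    and k: "k < K" and t: "0 \<le> t" "t \<le> \<tau>"
  shows "S' k t = S k t"
proof (rule ccontr)
  interpret G: gps_system N r \<phi> K A S by (fact sys)
  interpret G': gps_system N r \<phi> K A' S' by (fact sys')
  define Z where "Z = {t. 0 \<le> t \<and> t \<le> \<tau> \<and> (\<exists>k<K. S' k t \<noteq> S k t)}"
  assume "S' k t \<noteq> S k t"
  then have "t \<in> Z" using k t by (auto simp: Z_def)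
  moreover have bdd: "bdd_below Z" by (auto simp: Z_def intro: bdd_belowI[of _ 0])
  ultimately have t0: "0 \<le> Inf Z" "Inf Z \<le> \<tau>"
    using cInf_lower[of t Z] by (auto simp: Z_def intro: cInf_greatest)
  \<comment> \<open>the first disagreement cannot happen at Inf Z, since services are continuous,
     nor right after it, since the backlogs are then locally constant\<close>
  have before: "S' j s = S j s" if "j < K" "0 \<le> s" "s < Inf Z" for j s
    using that t0 cInf_lower[OF _ bdd, of s] by (force simp: Z_def)
  have agree: "S' j (Inf Z) = S j (Inf Z)" if j: "j < K" for j
  proof (rule antisym)
    show "S' j (Inf Z) \<le> S j (Inf Z)"
      using G'.service_le_if_le_before[OF j t0(1) G.service_nonneg[OF j t0(1)]]
        before[OF j] G.service_mono[OF j] by fastforce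
    show "S j (Inf Z) \<le> S' j (Inf Z)"
      using G.service_le_if_le_before[OF j t0(1) G'.service_nonneg[OF j t0(1)]]
        before[OF j] G'.service_mono[OF j] by fastforce
  qed
  obtain \<epsilon> where "0 < \<epsilon>" and after: "\<And>j s. j < K \<Longrightarrow> Inf Z \<le> s \<Longrightarrow> s < Inf Z + \<epsilon> \<Longrightarrow> S' j s = S j s"
    by (rule gps_service_agree_after[OF sys sys' t0(1) const const' same_arrivals agree])
      (use t0 in auto)
  then obtain z where "z \<in> Z" "z < Inf Z + \<epsilon>"
    using cInf_less_iff[OF _ bdd, of "Inf Z + \<epsilon>"] \<open>t \<in> Z\<close> by auto
  then show False using after cInf_lower[OF _ bdd, of z] by (auto simp: Z_def)
qed

section \<open>Packet departures under GPS\<close>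

locale packet_arrivals =
  fixes K N :: nat and r L :: real and \<phi> :: "nat \<Rightarrow> real"
    and a :: "'p::linorder \<Rightarrow> real" and u :: "'p \<Rightarrow> nat"
    and gps :: "'p set \<Rightarrow> nat \<Rightarrow> real \<Rightarrow> real"
  assumes N_ge_1: "1 \<le> N" and r_pos: "0 < r" and L_pos: "0 < L"
    and weight_pos: "\<And>k. k < K \<Longrightarrow> 0 < \<phi> k"
    and user_less: "\<And>p. u p < K" and arrival_nonneg: "\<And>p. 0 \<le> a p"
    and finite_arrived: "\<And>t. finite {p. a p \<le> t}"
    and gps_fed: "\<And>P. is_gps N r \<phi> K (arrived_work L a u P) (gps P)"
begin

abbreviation C :: real where "C \<equiv> real N * r"
abbreviation arrivals :: "'p set \<Rightarrow> nat \<Rightarrow> real \<Rightarrow> real" where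
  "arrivals P \<equiv> arrived_work L a u P"
abbreviation fifo_prefix :: "'p set \<Rightarrow> 'p \<Rightarrow> 'p set" where
  "fifo_prefix P p \<equiv> {q \<in> P. u q = u p \<and> (a q < a p \<or> (a q = a p \<and> q \<le> p))}"
abbreviation work_upto :: "'p set \<Rightarrow> 'p \<Rightarrow> real" where
  "work_upto P p \<equiv> real (fifo_pos a u P p) * L"
abbreviation dep :: "'p set \<Rightarrow> 'p \<Rightarrow> real" where
  "dep P p \<equiv> gps_departure L a u P (gps P) p"
abbreviation arrived :: "real \<Rightarrow> 'p set" where
  "arrived \<tau> \<equiv> {p. a p \<le> \<tau>}"

lemma capacity_pos: "0 < C"
  using N_ge_1 r_pos by simp

lemma finite_arrived_user: "finite {q \<in> P. u q = k \<and> a q \<le> t}"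
  by (rule finite_subset[OF _ finite_arrived[of t]]) auto

lemma gps_system_fed: "gps_system N r \<phi> K (arrivals P) (gps P)"
proof
  show "arrivals P k s \<le> arrivals P k t" if "s \<le> t" for k s t
    unfolding arrived_work_def using L_pos that by (auto intro!: card_mono finite_arrived_user)
  show "0 \<le> arrivals P k t" for k t
    unfolding arrived_work_def using L_pos by simp
qed (use capacity_pos weight_pos gps_fed in auto)

lemma arrived_constant_after:
  "\<exists>e>0. \<forall>t. t0 \<le> t \<and> t < t0 + e \<longrightarrow> arrived t = arrived t0"
proof -
  \<comment> \<open>the first arrival instant after t0, capped at t0 + 1\<close>
  define E where "E = insert (t0 + 1) (a ` {p. t0 < a p \<and> a p \<le> t0 + 1})"
  have E: "finite E" "E \<noteq> {}"
    unfolding E_def by (auto intro: finite_subset[OF _ finite_arrived[of "t0 + 1"]])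
  have "0 < Min E - t0" using E by (simp add: Min_gr_iff E_def)
  moreover have "arrived t = arrived t0" if t: "t0 \<le> t" "t < t0 + (Min E - t0)" for t
  proof -
    have "Min E \<le> t0 + 1" using E by (simp add: E_def)
    then have "Min E \<le> a p" if "t0 < a p" "a p \<le> t" for p
      using E that t by (intro Min_le) (auto simp: E_def)
    then show ?thesis using t by force
  qed
  ultimately show ?thesis by blast
qed

lemma arrivals_constant_after:
  "\<exists>e>0. \<forall>k<K. \<forall>t. t0 \<le> t \<and> t < t0 + e \<longrightarrow> arrivals P k t = arrivals P k t0"
proof -
  obtain e where "0 < e" and same: "\<forall>t. t0 \<le> t \<and> t < t0 + e \<longrightarrow> arrived t = arrived t0"
    using arrived_constant_after[of t0] by (elim exE conjE)
  have "arrivals P k t = arrivals P k t0" if "t0 \<le> t" "t < t0 + e" for k t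
  proof -
    have "{q \<in> P. u q = k \<and> a q \<le> t} = {q \<in> P. u q = k \<and> a q \<le> t0}"
      using same[rule_format, of t] that by blast
    then show ?thesis unfolding arrived_work_def by simp
  qed
  then show ?thesis using \<open>0 < e\<close> by blast
qed

lemma finite_fifo_prefix: "finite (fifo_prefix P p)"
  by (rule finite_subset[OF _ finite_arrived[of "a p"]]) auto

lemma fifo_pos_pos: "p \<in> P \<Longrightarrow> 0 < fifo_pos a u P p"
  unfolding fifo_pos_def using finite_fifo_prefix[of P p] by (auto simp: card_gt_0_iff)

lemma mem_fifo_prefix_if_fifo_pos_le:
  assumes "y \<in> P" "u y = u m" "fifo_pos a u P y \<le> fifo_pos a u P m"
  shows "y \<in> fifo_prefix P m"
proof (rule ccontr)
  assume "y \<notin> fifo_prefix P m"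
  then have "fifo_prefix P m \<subset> fifo_prefix P y" using assms(1,2) by auto
  then have "fifo_pos a u P m < fifo_pos a u P y"
    unfolding fifo_pos_def by (rule psubset_card_mono[OF finite_fifo_prefix])
  then show False using assms(3) by simp
qed

lemma work_upto_le_arrivals:
  assumes "p \<in> P" "a p \<le> t"
  shows "work_upto P p \<le> arrivals P (u p) t"
proof -
  have "fifo_pos a u P p \<le> card {q \<in> P. u q = u p \<and> a q \<le> t}"
    unfolding fifo_pos_def using assms by (intro card_mono finite_arrived_user) auto
  then show ?thesis unfolding arrived_work_def using L_pos by simp
qed

lemma fifo_pos_arrived: "a p \<le> \<tau> \<Longrightarrow> fifo_pos a u (arrived \<tau>) p = fifo_pos a u UNIV p"
  unfolding fifo_pos_def by (rule arg_cong[of _ _ card]) auto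

lemma departure_le: "0 \<le> t \<Longrightarrow> work_upto P p \<le> gps P (u p) t \<Longrightarrow> dep P p \<le> t"
  unfolding gps_departure_def by (rule gps_system.reach_time_le[OF gps_system_fed])

lemma service_less_before_departure:
  "0 \<le> t \<Longrightarrow> t < dep P p \<Longrightarrow> gps P (u p) t < work_upto P p"
  unfolding gps_departure_def by (rule gps_system.service_less_before_reach_time[OF gps_system_fed])

lemma service_reaches_work_upto:
  assumes "p \<in> P"
  shows "\<exists>t\<ge>0. work_upto P p \<le> gps P (u p) t"
  by (rule gps_system.service_eventually_reaches[OF gps_system_fed user_less arrival_nonneg])
    (use work_upto_le_arrivals[OF assms] in auto)

lemma departure_nonneg: "p \<in> P \<Longrightarrow> 0 \<le> dep P p"
  unfolding gps_departure_def
  by (rule gps_system.reach_time_nonneg[OF gps_system_fed service_reaches_work_upto])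

lemma service_at_departure: "p \<in> P \<Longrightarrow> gps P (u p) (dep P p) = work_upto P p"
  unfolding gps_departure_def
  using gps_system.service_at_reach_time[OF gps_system_fed user_less _ service_reaches_work_upto]
    fifo_pos_pos L_pos by simp

lemma arrival_le_departure:
  assumes p: "p \<in> P"
  shows "a p \<le> dep P p"
proof (rule ccontr)
  interpret G: gps_system N r \<phi> K "arrivals P" "gps P" by (rule gps_system_fed)
  assume early: "\<not> a p \<le> dep P p"
  \<comment> \<open>at its departure time p would not even have arrived\<close>
  have "{q \<in> P. u q = u p \<and> a q \<le> dep P p} \<subseteq> fifo_prefix P p - {p}"
    using early by auto
  then have "card {q \<in> P. u q = u p \<and> a q \<le> dep P p} \<le> card (fifo_prefix P p - {p})"
    by (rule card_mono[OF finite_Diff[OF finite_fifo_prefix]])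
  also have "\<dots> = fifo_pos a u P p - 1"
    unfolding fifo_pos_def using p finite_fifo_prefix[of P p] by (simp add: card_Diff_singleton)
  finally have "card {q \<in> P. u q = u p \<and> a q \<le> dep P p} \<le> fifo_pos a u P p - 1" .
  then have "arrivals P (u p) (dep P p) < work_upto P p"
    unfolding arrived_work_def using L_pos fifo_pos_pos[OF p] by (simp add: of_nat_diff)
  then show False
    using G.service_le_arrivals[OF user_less[of p] departure_nonneg[OF p]] service_at_departure[OF p]
    by simp
qed

lemma backlogged_before_departure:
  assumes "p \<in> P" "a p \<le> s" "0 \<le> s" "s < dep P p"
  shows "gps P (u p) s < arrivals P (u p) s"
  using service_less_before_departure[OF assms(3,4)] work_upto_le_arrivals[OF assms(1,2)]
  by simp

lemma gps_arrived_agree: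
  assumes "0 \<le> t" "t \<le> \<tau>" "k < K"
  shows "gps (arrived \<tau>) k t = gps UNIV k t"
proof (rule gps_service_agree[OF gps_system_fed gps_system_fed arrivals_constant_after
      arrivals_constant_after _ assms(3,1,2)])
  fix j s assume "s \<le> \<tau>"
  then have "{q \<in> arrived \<tau>. u q = j \<and> a q \<le> s} = {q \<in> UNIV. u q = j \<and> a q \<le> s}" by auto
  then show "arrivals (arrived \<tau>) j s = arrivals UNIV j s" unfolding arrived_work_def by simp
qed

lemma departure_arrived_eq:
  assumes y: "a y \<le> \<tau>" and early: "dep UNIV y \<le> \<tau> \<or> dep (arrived \<tau>) y \<le> \<tau>"
  shows "dep (arrived \<tau>) y = dep UNIV y"
proof -
  have yP: "y \<in> arrived \<tau>" using y by simp
  have agree: "gps (arrived \<tau>) (u y) t = gps UNIV (u y) t" if "0 \<le> t" "t \<le> \<tau>" for t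
    using gps_arrived_agree[OF that user_less] .
  note work = fifo_pos_arrived[OF y]
  have "dep (arrived \<tau>) y \<le> dep UNIV y" if "dep UNIV y \<le> \<tau>"
    using departure_le[of "dep UNIV y" "arrived \<tau>" y] service_at_departure[of y UNIV]
      agree[OF departure_nonneg that] departure_nonneg[of y UNIV] work by simp
  moreover have "dep UNIV y \<le> dep (arrived \<tau>) y" if "dep (arrived \<tau>) y \<le> \<tau>"
    using departure_le[of "dep (arrived \<tau>) y" UNIV y] service_at_departure[OF yP]
      agree[OF departure_nonneg[OF yP] that] departure_nonneg[OF yP] work by simp
  ultimately show ?thesis using early by fastforce
qed

abbreviation remaining_work :: "'p set \<Rightarrow> real \<Rightarrow> 'p \<Rightarrow> real" where
  "remaining_work P \<tau> p \<equiv> (work_upto P p - gps P (u p) \<tau>) / \<phi> (u p)"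

lemma normalized_service_at_departure:
  assumes q: "q \<in> P" "a q \<le> \<tau>" and x: "x \<in> P" "a x \<le> \<tau>"
    and late: "\<tau> \<le> dep P q" and order: "dep P q \<le> dep P x"
  shows "remaining_work P \<tau> q = (gps P (u x) (dep P q) - gps P (u x) \<tau>) / \<phi> (u x)"
proof -
  interpret G: gps_system N r \<phi> K "arrivals P" "gps P" by (rule gps_system_fed)
  have \<tau>: "0 \<le> \<tau>" using q(2) arrival_nonneg order_trans by blast
  have "(gps P (u q) (dep P q) - gps P (u q) \<tau>) / \<phi> (u q)
      = (gps P (u x) (dep P q) - gps P (u x) \<tau>) / \<phi> (u x)"
  proof (rule G.normalized_service_eq[OF user_less user_less \<tau> late])
    fix s assume s: "\<tau> \<le> s" "s < dep P q"
    then have "0 \<le> s" "a q \<le> s" "a x \<le> s" "s < dep P x" using \<tau> q x order by auto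
    then show "u q \<in> G.backlog s \<and> u x \<in> G.backlog s"
      using backlogged_before_departure[OF q(1)] backlogged_before_departure[OF x(1)] s(2) user_less
      by auto
  qed
  then show ?thesis using service_at_departure[OF q(1)] by simp
qed

lemma remaining_work_less_if_departs_before:
  assumes x: "x \<in> P" "a x \<le> \<tau>" and q: "q \<in> P" "a q \<le> \<tau>"
    and late: "\<tau> \<le> dep P x" and order: "dep P x < dep P q"
  shows "remaining_work P \<tau> x < remaining_work P \<tau> q"
proof -
  have "remaining_work P \<tau> x = (gps P (u q) (dep P x) - gps P (u q) \<tau>) / \<phi> (u q)"
    using normalized_service_at_departure[OF x q late] order by simp
  also have "\<dots> < remaining_work P \<tau> q"
    using service_less_before_departure[OF departure_nonneg[OF x(1)] order]
      weight_pos[OF user_less[of q]] by (simp add: divide_strict_right_mono)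
  finally show ?thesis .
qed

lemma remaining_work_le_if_departs_no_later:
  assumes q: "q \<in> P" "a q \<le> \<tau>" and x: "x \<in> P" "a x \<le> \<tau>"
    and late: "\<tau> \<le> dep P q" and order: "dep P q \<le> dep P x"
  shows "remaining_work P \<tau> q \<le> remaining_work P \<tau> x"
proof -
  have "gps P (u x) (dep P q) \<le> work_upto P x"
    using gps_system.service_mono[OF gps_system_fed[of P] user_less[of x] departure_nonneg[OF q(1)] order]
      service_at_departure[OF x(1)] by simp
  then show ?thesis
    using normalized_service_at_departure[OF q x late order] weight_pos[OF user_less[of x]]
    by (simp add: divide_right_mono)
qed

lemma remaining_work_arrived:
  assumes "a p \<le> \<tau>"
  shows "remaining_work (arrived \<tau>) \<tau> p = remaining_work UNIV \<tau> p"
proof -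
  have "0 \<le> \<tau>" using assms arrival_nonneg order_trans by blast
  then show ?thesis
    using fifo_pos_arrived[OF assms] gps_arrived_agree[OF _ order_refl user_less] by simp
qed

lemma departure_order_preserved:
  assumes q: "a q \<le> \<tau>" and x: "a x \<le> \<tau>"
    and hyp_order: "dep (arrived \<tau>) q \<le> dep (arrived \<tau>) x"
  shows "dep UNIV q \<le> dep UNIV x"
proof (rule ccontr)
  let ?P = "arrived \<tau>"
  assume "\<not> ?thesis"
  then have real_order: "dep UNIV x < dep UNIV q" by simp
  show False
  proof (cases "dep UNIV x \<le> \<tau>")
    case True
    then have "dep ?P x = dep UNIV x" using departure_arrived_eq[OF x] by simp
    moreover from this have "dep ?P q = dep UNIV q"
      using departure_arrived_eq[OF q] hyp_order True by simp
    ultimately show False using hyp_order real_order by simp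
  next
    case False
    have late: "\<tau> < dep ?P q"
    proof (rule ccontr)
      assume "\<not> \<tau> < dep ?P q"
      then have "dep ?P q = dep UNIV q" using departure_arrived_eq[OF q] by simp
      then show False using False real_order \<open>\<not> \<tau> < dep ?P q\<close> by simp
    qed
    have "remaining_work UNIV \<tau> x < remaining_work UNIV \<tau> q"
      by (rule remaining_work_less_if_departs_before) (use x q False real_order in auto)
    moreover have "remaining_work ?P \<tau> q \<le> remaining_work ?P \<tau> x"
      by (rule remaining_work_le_if_departs_no_later) (use q x late hyp_order in auto)
    ultimately show False using remaining_work_arrived[OF q] remaining_work_arrived[OF x] by simp
  qed
qed

lemma service_le_work_arrived_before:
  assumes k: "k < K" and t0: "0 \<le> t0"
  shows "gps P k t0 \<le> real (card {q \<in> P. u q = k \<and> a q < t0}) * L"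
proof (rule gps_system.service_le_if_le_before[OF gps_system_fed k t0])
  fix s assume s: "0 \<le> s" "s < t0"
  have "card {q \<in> P. u q = k \<and> a q \<le> s} \<le> card {q \<in> P. u q = k \<and> a q < t0}"
    by (rule card_mono) (use s in \<open>auto intro: finite_subset[OF _ finite_arrived[of t0]]\<close>)
  then have "arrivals P k s \<le> real (card {q \<in> P. u q = k \<and> a q < t0}) * L"
    unfolding arrived_work_def using L_pos by simp
  then show "gps P k s \<le> real (card {q \<in> P. u q = k \<and> a q < t0}) * L"
    using gps_system.service_le_arrivals[OF gps_system_fed[of P] k s(1)] by simp
qed (use L_pos in simp)

lemma card_earlier_and_later_le_fifo_pos:
  assumes Y: "finite Y" "m \<in> Y" and same_user: "\<And>y. y \<in> Y \<Longrightarrow> u y = u m"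
    and late: "\<And>y. y \<in> Y \<Longrightarrow> t0 \<le> a y"
    and last: "\<And>y. y \<in> Y \<Longrightarrow> fifo_pos a u UNIV y \<le> fifo_pos a u UNIV m"
  shows "card {q. u q = u m \<and> a q < t0} + card Y \<le> fifo_pos a u UNIV m"
proof -
  define E where "E = {q. u q = u m \<and> a q < t0}"
  have finite_E: "finite E" unfolding E_def by (rule finite_subset[OF _ finite_arrived[of t0]]) auto
  have "E \<union> Y \<subseteq> fifo_prefix UNIV m"
  proof (intro subsetI, elim UnE)
    fix y assume "y \<in> E"
    then have "u y = u m" "a y < a m" using late[OF Y(2)] by (auto simp: E_def)
    then show "y \<in> fifo_prefix UNIV m" by simp
  next
    fix y assume "y \<in> Y"
    then show "y \<in> fifo_prefix UNIV m"
      by (intro mem_fifo_prefix_if_fifo_pos_le) (simp_all add: same_user last)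
  qed
  then have "card (E \<union> Y) \<le> fifo_pos a u UNIV m"
    unfolding fifo_pos_def by (rule card_mono[OF finite_fifo_prefix])
  moreover have "E \<inter> Y = {}" using late by (fastforce simp: E_def)
  ultimately show ?thesis using finite_E Y(1) by (simp add: E_def card_Un_disjoint)
qed

lemma user_work_served:
  assumes X: "finite X" and k: "k < K" and t0: "0 \<le> t0" "t0 \<le> d"
    and X_in: "\<And>x. x \<in> X \<Longrightarrow> t0 \<le> a x \<and> dep UNIV x \<le> d"
  shows "real (card {x \<in> X. u x = k}) * L \<le> gps UNIV k d - gps UNIV k t0"
proof -
  interpret G: gps_system N r \<phi> K "arrivals UNIV" "gps UNIV" by (rule gps_system_fed)
  define Xk where "Xk = {x \<in> X. u x = k}"
  define E where "E = {q. u q = k \<and> a q < t0}"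
  show ?thesis
  proof (cases "Xk = {}")
    case True
    then show ?thesis unfolding Xk_def[symmetric] using G.service_mono[OF k t0] by simp
  next
    case False
    have finite_Xk: "finite Xk" using X by (simp add: Xk_def)
    obtain m where m: "m \<in> Xk" and m_max: "Max (fifo_pos a u UNIV ` Xk) = fifo_pos a u UNIV m"
      using obtains_MAX[OF finite_Xk False] by blast
    have "card E + card Xk \<le> fifo_pos a u UNIV m"
      using card_earlier_and_later_le_fifo_pos[OF finite_Xk m, of t0] m_max m X_in
        Max_ge[OF finite_imageI[OF finite_Xk], of _ "fifo_pos a u UNIV"]
      by (auto simp: E_def Xk_def)
    then have "real (card E) * L + real (card Xk) * L \<le> work_upto UNIV m"
      using L_pos by (simp add: distrib_right[symmetric] mult_right_mono del: of_nat_add)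
    moreover have "work_upto UNIV m \<le> gps UNIV k d"
      using service_at_departure[of m UNIV] G.service_mono[OF k departure_nonneg[of m UNIV]]
        X_in[of m] m by (simp add: Xk_def)
    moreover have "gps UNIV k t0 \<le> real (card E) * L"
      using service_le_work_arrived_before[OF k t0(1), where P = UNIV] by (simp add: E_def)
    ultimately show ?thesis unfolding Xk_def by linarith
  qed
qed

lemma work_served:
  assumes X: "finite X" and t0: "0 \<le> t0" "t0 \<le> d"
    and X_in: "\<And>x. x \<in> X \<Longrightarrow> t0 \<le> a x \<and> dep UNIV x \<le> d"
  shows "real (card X) * L \<le> C * (d - t0)"
proof -
  interpret G: gps_system N r \<phi> K "arrivals UNIV" "gps UNIV" by (rule gps_system_fed)
  have "X = (\<Union>k<K. {x \<in> X. u x = k})" using user_less by auto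
  moreover have "card (\<Union>k<K. {x \<in> X. u x = k}) = (\<Sum>k<K. card {x \<in> X. u x = k})"
    by (rule card_UN_disjoint) (use X in auto)
  ultimately have "card X = (\<Sum>k<K. card {x \<in> X. u x = k})" by simp
  then have "real (card X) * L = (\<Sum>k<K. real (card {x \<in> X. u x = k}) * L)"
    by (simp add: sum_distrib_right)
  also have "\<dots> \<le> (\<Sum>k<K. gps UNIV k d - gps UNIV k t0)"
    by (rule sum_mono) (rule user_work_served[OF X _ t0 X_in], auto)
  also have "\<dots> \<le> C * (d - t0)" by (rule G.total_service_increment_le[OF t0])
  finally show ?thesis .
qed

section \<open>The MPGPS schedule\<close>

context
  fixes M :: nat and tau :: "nat \<Rightarrow> real" and F :: "nat \<Rightarrow> 'p set"
  assumes M_ge_1: "1 \<le> M" and mpgps: "is_mpgps N r L M a u gps tau F"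
begin

abbreviation free_at :: "nat \<Rightarrow> real" where "free_at j \<equiv> prev_end N r L tau F j"
abbreviation queue :: "nat \<Rightarrow> real \<Rightarrow> 'p set" where "queue j t \<equiv> mpgps_queue a F j t"
abbreviation busy_start :: "nat \<Rightarrow> bool" where "busy_start j \<equiv> j = 0 \<or> tau j \<noteq> free_at j"

lemma mpgps_batch:
  "if \<exists>t\<ge>free_at j. queue j t \<noteq> {}
   then free_at j \<le> tau j \<and> queue j (tau j) \<noteq> {}
     \<and> (\<forall>t. free_at j \<le> t \<and> t < tau j \<longrightarrow> queue j t = {})
     \<and> F j \<subseteq> queue j (tau j) \<and> card (F j) = min M (card (queue j (tau j)))
     \<and> (\<forall>p\<in>F j. \<forall>q\<in>queue j (tau j) - F j. dep (arrived (tau j)) p \<le> dep (arrived (tau j)) q)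
   else F j = {}"
  using mpgps unfolding is_mpgps_def Let_def by blast

lemma nonempty_batch:
  assumes "F j \<noteq> {}"
  shows "free_at j \<le> tau j" "\<And>t. free_at j \<le> t \<Longrightarrow> t < tau j \<Longrightarrow> queue j t = {}"
    "F j \<subseteq> queue j (tau j)"
    "\<And>p q. p \<in> F j \<Longrightarrow> q \<in> queue j (tau j) - F j
       \<Longrightarrow> dep (arrived (tau j)) p \<le> dep (arrived (tau j)) q"
proof -
  have "\<exists>t\<ge>free_at j. queue j t \<noteq> {}"
    using mpgps_batch[of j] assms by (auto split: if_splits)
  then have "free_at j \<le> tau j \<and> (\<forall>t. free_at j \<le> t \<and> t < tau j \<longrightarrow> queue j t = {})
     \<and> F j \<subseteq> queue j (tau j)
     \<and> (\<forall>p\<in>F j. \<forall>q\<in>queue j (tau j) - F j. dep (arrived (tau j)) p \<le> dep (arrived (tau j)) q)"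
    using mpgps_batch[of j] by (simp only: if_True) blast
  then show "free_at j \<le> tau j" "\<And>t. free_at j \<le> t \<Longrightarrow> t < tau j \<Longrightarrow> queue j t = {}"
    "F j \<subseteq> queue j (tau j)"
    "\<And>p q. p \<in> F j \<Longrightarrow> q \<in> queue j (tau j) - F j
       \<Longrightarrow> dep (arrived (tau j)) p \<le> dep (arrived (tau j)) q"
    by blast+
qed

lemma finite_queue: "finite (queue j t)"
  unfolding mpgps_queue_def by (rule finite_subset[OF _ finite_arrived[of t]]) auto

lemma card_batch_le: "card (F j) \<le> M"
  using mpgps_batch[of j] by (auto split: if_splits)

lemma batch_arrived: "x \<in> F j \<Longrightarrow> a x \<le> tau j"
  using nonempty_batch(3)[of j] unfolding mpgps_queue_def by auto

lemma batches_disjoint: "x \<in> F j \<Longrightarrow> i < j \<Longrightarrow> x \<notin> F i"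
  using nonempty_batch(3)[of j] unfolding mpgps_queue_def by auto

lemma finite_batch: "finite (F j)"
  using nonempty_batch(3)[of j] finite_queue finite_subset by fastforce

lemma batch_start_nonneg: "F j \<noteq> {} \<Longrightarrow> 0 \<le> tau j"
  using batch_arrived arrival_nonneg order_trans by blast

lemma earlier_batch_nonempty:
  assumes "F h \<noteq> {}" "j \<le> h"
  shows "F j \<noteq> {}"
proof
  assume empty: "F j = {}"
  \<comment> \<open>an empty batch means no packet is ever queued again\<close>
  have never_queued: "\<not> (\<exists>t\<ge>free_at j. queue j t \<noteq> {})"
  proof
    assume "\<exists>t\<ge>free_at j. queue j t \<noteq> {}"
    then have "card (F j) = min M (card (queue j (tau j)))" "queue j (tau j) \<noteq> {}"
      using mpgps_batch[of j] by auto
    then show False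
      using empty M_ge_1 finite_queue[of j "tau j"] by (auto simp: min_def card_eq_0_iff split: if_splits)
  qed
  have "\<exists>i<j. x \<in> F i" for x
  proof -
    have "x \<notin> queue j (max (free_at j) (a x))" using never_queued by auto
    then show ?thesis unfolding mpgps_queue_def by auto
  qed
  then have "queue h t = {}" for t
    using assms(2) empty unfolding mpgps_queue_def by (fastforce simp: le_less)
  then show False using mpgps_batch[of h] assms(1) by auto
qed

lemma busy_start_le_arrival:
  assumes nonempty: "F j \<noteq> {}" and "busy_start j" and x: "x \<in> F i" "j \<le> i"
  shows "tau j \<le> a x"
proof (rule ccontr)
  assume early: "\<not> tau j \<le> a x"
  show False
  proof (cases "tau j = free_at j")
    case True
    then show False using \<open>busy_start j\<close> early arrival_nonneg[of x] by (simp add: prev_end_def)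
  next
    case False
    \<comment> \<open>the servers were idle on [free_at j, tau j), yet x would have been queued then\<close>
    let ?t = "max (free_at j) (a x)"
    have "free_at j < tau j" using nonempty_batch(1)[OF nonempty] False by simp
    then have "queue j ?t = {}" using nonempty_batch(2)[OF nonempty, of ?t] early by simp
    moreover have "x \<in> queue j ?t"
      using batches_disjoint[OF x(1)] x(2) unfolding mpgps_queue_def by auto
    ultimately show False by simp
  qed
qed

lemma last_busy_start:
  obtains j0 where "j0 \<le> h" "busy_start j0" "\<And>j. j0 < j \<Longrightarrow> j \<le> h \<Longrightarrow> tau j = free_at j"
proof -
  define j0 where "j0 = Max {j. j \<le> h \<and> busy_start j}"
  have "j0 \<in> {j. j \<le> h \<and> busy_start j}" unfolding j0_def by (rule Max_in) auto
  moreover have "tau j = free_at j" if "j0 < j" "j \<le> h" for j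
    using Max_ge[of "{j. j \<le> h \<and> busy_start j}" j] that unfolding j0_def by fastforce
  ultimately show ?thesis using that by blast
qed

lemma back_to_back_batch_start:
  assumes "s \<le> h" and no_idle: "\<And>j. s < j \<Longrightarrow> j \<le> h \<Longrightarrow> tau j = free_at j"
  shows "tau h = tau s + real (\<Sum>i\<in>{s..<h}. card (F i)) * L / C"
proof -
  have "n \<le> h \<longrightarrow> tau n = tau s + real (\<Sum>i\<in>{s..<n}. card (F i)) * L / C" if "s \<le> n" for n
    using that
  proof (induction n rule: dec_induct)
    case base
    then show ?case by simp
  next
    case (step n)
    show ?case
    proof
      assume "Suc n \<le> h"
      then have "tau (Suc n) = tau n + real (card (F n)) * L / C"
        using no_idle[of "Suc n"] step.hyps(1) by (simp add: prev_end_def batch_end_def)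
      then show "tau (Suc n) = tau s + real (\<Sum>i\<in>{s..<Suc n}. card (F i)) * L / C"
        using step.IH \<open>Suc n \<le> h\<close> step.hyps(1)
        by (simp add: sum.atLeastLessThan_Suc add_divide_distrib distrib_right)
    qed
  qed
  from this[OF assms(1)] show ?thesis by simp
qed

lemma arrives_after_overtaking_batch:
  assumes q: "q \<in> F g" and overtakes: "dep UNIV p < dep UNIV q"
    and x: "x \<in> F j" "g < j" and x_first: "dep UNIV x \<le> dep UNIV p"
  shows "tau g < a x"
proof (rule ccontr)
  assume queued: "\<not> tau g < a x"
  then have "x \<in> queue g (tau g) - F g"
    using batches_disjoint[OF x(1)] x(2) unfolding mpgps_queue_def by auto
  then have "dep (arrived (tau g)) q \<le> dep (arrived (tau g)) x"
    using nonempty_batch(4)[of g q x] q by blast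
  then have "dep UNIV q \<le> dep UNIV x"
    using departure_order_preserved batch_arrived[OF q] queued by simp
  then show False using overtakes x_first by simp
qed

lemma delay_bound_from:
  assumes p: "p \<in> F h" and "g \<le> s" "s \<le> h"
    and no_idle: "\<And>j. g < j \<Longrightarrow> j \<le> h \<Longrightarrow> tau j = free_at j" and "0 \<le> tau g"
    and served_before: "\<And>x. x \<in> insert p (\<Union>j\<in>{s..<h}. F j) \<Longrightarrow> tau g \<le> a x \<and> dep UNIV x \<le> dep UNIV p"
  shows "batch_end N r L tau F h - dep UNIV p
    \<le> (real (\<Sum>i\<in>{g..<s}. card (F i)) + real (card (F h)) - 1) * L / C"
proof -
  define X where "X = insert p (\<Union>j\<in>{s..<h}. F j)"
  define A where "A = real (\<Sum>i\<in>{g..<s}. card (F i))"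
  define B where "B = real (\<Sum>i\<in>{s..<h}. card (F i))"
  have "F i \<inter> F j = {}" if "i \<noteq> j" for i j
    using batches_disjoint that by (metis disjoint_iff linorder_neqE_nat)
  then have "card (\<Union>j\<in>{s..<h}. F j) = (\<Sum>i\<in>{s..<h}. card (F i))"
    by (intro card_UN_disjoint) (auto simp: finite_batch)
  moreover have "p \<notin> (\<Union>j\<in>{s..<h}. F j)" using batches_disjoint[OF p] by simp
  ultimately have "card X = 1 + (\<Sum>i\<in>{s..<h}. card (F i))"
    unfolding X_def by (simp add: finite_batch)
  moreover have "real (card X) * L \<le> C * (dep UNIV p - tau g)"
  proof (rule work_served)
    show "finite X" unfolding X_def by (simp add: finite_batch)
    show "tau g \<le> dep UNIV p" using served_before[of p] arrival_le_departure[of p UNIV] by simp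
  qed (use served_before \<open>0 \<le> tau g\<close> in \<open>simp_all add: X_def\<close>)
  ultimately have served: "(1 + B) * L \<le> C * (dep UNIV p - tau g)" by (simp add: B_def)
  have "tau h = tau g + real (\<Sum>i\<in>{g..<h}. card (F i)) * L / C"
    using back_to_back_batch_start[OF order_trans[OF assms(2,3)] no_idle] by simp
  also have "(\<Sum>i\<in>{g..<h}. card (F i)) = (\<Sum>i\<in>{g..<s}. card (F i)) + (\<Sum>i\<in>{s..<h}. card (F i))"
    using assms(2,3) by (simp add: sum.atLeastLessThan_concat)
  finally have "tau h = tau g + (A + B) * L / C" by (simp add: A_def B_def)
  then have "C * tau h = C * tau g + (A + B) * L" using N_ge_1 r_pos by (simp add: distrib_left)
  then have "C * (batch_end N r L tau F h - dep UNIV p) \<le> (A + real (card (F h)) - 1) * L"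
    using served N_ge_1 r_pos by (simp add: batch_end_def algebra_simps)
  then show ?thesis
    using capacity_pos by (simp add: A_def pos_le_divide_eq mult.commute)
qed

lemma delay_bound_without_overtaking:
  assumes p: "p \<in> F h" and j0: "j0 \<le> h" "busy_start j0"
    and no_idle: "\<And>j. j0 < j \<Longrightarrow> j \<le> h \<Longrightarrow> tau j = free_at j"
    and not_overtaking: "\<And>x j. x \<in> F j \<Longrightarrow> j0 \<le> j \<Longrightarrow> j < h \<Longrightarrow> dep UNIV x \<le> dep UNIV p"
  shows "batch_end N r L tau F h - dep UNIV p \<le> (real (card (F h)) - 1) * L / C"
proof -
  have F_j0: "F j0 \<noteq> {}" using earlier_batch_nonempty p j0(1) by blast
  have "batch_end N r L tau F h - dep UNIV p
      \<le> (real (\<Sum>i\<in>{j0..<j0}. card (F i)) + real (card (F h)) - 1) * L / C"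
  proof (rule delay_bound_from[OF p order_refl j0(1) no_idle batch_start_nonneg[OF F_j0]])
    fix x assume "x \<in> insert p (\<Union>j\<in>{j0..<h}. F j)"
    then show "tau j0 \<le> a x \<and> dep UNIV x \<le> dep UNIV p"
      using busy_start_le_arrival[OF F_j0 j0(2)] not_overtaking p j0(1) by fastforce
  qed
  then show ?thesis by simp
qed

lemma delay_bound_after_last_overtaking:
  assumes p: "p \<in> F h" and q: "q \<in> F g" "dep UNIV p < dep UNIV q" and "g < h"
    and no_idle: "\<And>j. g < j \<Longrightarrow> j \<le> h \<Longrightarrow> tau j = free_at j"
    and not_overtaking: "\<And>x j. x \<in> F j \<Longrightarrow> g < j \<Longrightarrow> j < h \<Longrightarrow> dep UNIV x \<le> dep UNIV p"
  shows "batch_end N r L tau F h - dep UNIV p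
    \<le> (real (card (F g)) + real (card (F h)) - 1) * L / C"
proof -
  have "batch_end N r L tau F h - dep UNIV p
      \<le> (real (\<Sum>i\<in>{g..<Suc g}. card (F i)) + real (card (F h)) - 1) * L / C"
  proof (rule delay_bound_from[OF p _ _ no_idle batch_start_nonneg])
    fix x assume "x \<in> insert p (\<Union>j\<in>{Suc g..<h}. F j)"
    then show "tau g \<le> a x \<and> dep UNIV x \<le> dep UNIV p"
      using arrives_after_overtaking_batch[OF q] not_overtaking p \<open>g < h\<close>
      by (fastforce intro: less_imp_le)
  qed (use q \<open>g < h\<close> in auto)
  then show ?thesis by simp
qed

theorem mpgps_delay_bound:
  assumes p: "p \<in> F h"
  shows "batch_end N r L tau F h - dep UNIV p \<le> (2 * real M - 1) * L / C"
proof -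
  obtain j0 where j0: "j0 \<le> h" "busy_start j0"
    and no_idle: "\<And>j. j0 < j \<Longrightarrow> j \<le> h \<Longrightarrow> tau j = free_at j"
    by (rule last_busy_start[of h]) blast
  define G where "G = {g. j0 \<le> g \<and> g < h \<and> (\<exists>q\<in>F g. dep UNIV p < dep UNIV q)}"
  have bound: "(real m + real (card (F h)) - 1) * L / C \<le> (2 * real M - 1) * L / C"
    if "m \<le> M" for m
    using that card_batch_le[of h] L_pos capacity_pos
    by (intro divide_right_mono mult_right_mono) auto
  show ?thesis
  proof (cases "G = {}")
    case True
    then have "batch_end N r L tau F h - dep UNIV p \<le> (real (card (F h)) - 1) * L / C"
      by (intro delay_bound_without_overtaking[OF p j0 no_idle]) (auto simp: G_def not_less)
    then show ?thesis using bound[of 0] by simp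
  next
    case False
    define g where "g = Max G"
    have "finite G" by (rule finite_subset[of _ "{..<h}"]) (auto simp: G_def)
    then have "g \<in> G" using False unfolding g_def by (rule Max_in)
    then obtain q where q: "q \<in> F g" "dep UNIV p < dep UNIV q" and g: "j0 \<le> g" "g < h"
      unfolding G_def by blast
    have not_overtaking: "dep UNIV x \<le> dep UNIV p" if "x \<in> F j" "g < j" "j < h" for x j
    proof (rule ccontr)
      assume "\<not> dep UNIV x \<le> dep UNIV p"
      then have "j \<in> G" using that g unfolding G_def by (auto simp: not_le)
      then have "j \<le> g" unfolding g_def by (rule Max_ge[OF \<open>finite G\<close>])
      then show False using that by simp
    qed
    have "batch_end N r L tau F h - dep UNIV p
        \<le> (real (card (F g)) + real (card (F h)) - 1) * L / C"
      by (rule delay_bound_after_last_overtaking[OF p q g(2) _ not_overtaking])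
        (use no_idle g(1) in auto)
    then show ?thesis using bound[OF card_batch_le[of g]] by simp
  qed
qed

end

end

theorem theorem1:
  fixes K N M :: nat and r L :: real and \<phi> :: "nat \<Rightarrow> real"
    and a :: "'p::linorder \<Rightarrow> real" and u :: "'p \<Rightarrow> nat"
    and gps :: "'p set \<Rightarrow> nat \<Rightarrow> real \<Rightarrow> real"
    and tau :: "nat \<Rightarrow> real" and F :: "nat \<Rightarrow> 'p set"
  assumes "N \<ge> 1" and "r > 0" and "L > 0" and "M \<ge> 1"
    and "\<And>k. k < K \<Longrightarrow> \<phi> k > 0"
    and "\<And>p. u p < K" and "\<And>p. a p \<ge> 0"
    and "\<And>t. finite {p. a p \<le> t}"
    and "\<And>P. is_gps N r \<phi> K (arrived_work L a u P) (gps P)"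
    and "is_mpgps N r L M a u gps tau F"
  shows "\<forall>h. \<forall>p\<in>F h.
           batch_end N r L tau F h - gps_departure L a u UNIV (gps UNIV) p
             \<le> (2 * real M - 1) * L / (real N * r)"
proof -
  interpret packet_arrivals K N r L \<phi> a u gps
    by unfold_locales (use assms in auto)
  show ?thesis using mpgps_delay_bound[OF assms(4,10)] by blast
qed

end
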